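(* For any $n\in\mathbb{N}$ with $n\geq2$, the monoid $\mathrm{rps}_n$ is not finitely presented.
   Context: Let $\mathcal{A}_n=\{1<2<\cdots<n\}$. An rPS tableau is a finite (possibly empty) sequence of nonempty bottom-justified columns of boxes filled with positive integers, such that the entries of each column are weakly decreasing from top to bottom and the bottom entries of the columns form a strictly increasing sequence from left to right. Right insertion of a symbol $a$ into an rPS tableau $B$: if $a$ is strictly greater than every entry of the bottom row, append a new column consisting of $a$ at the right end; otherwise, let $z$ be the leftmost bottom-row entry with $z\geq a$ and put $a$ in a new box at the bottom of the column of $z$ (the previous entries of that column move up one box). For $w=w_1\cdots w_k$, $\mathfrak{R}_r(w)$ is obtained by starting with the empty tableau and right-inserting $w_1,\dots,w_k$ in order. The monoid $\mathrm{rps}_n$ is the quotient of the free monoid $\mathcal{A}_n^*$ by the congruence $u\equiv v\iff\mathfrak{R}_r(u)=\mathfrak{R}_r(v)$. *)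

theory Defs
  imports Main
begin

(* An rPS tableau is a list of columns (left to right); each column is a list
   of entries stored BOTTOM-FIRST, i.e. the head of a column is its bottom entry. *)

fun rps_rins :: "nat \<Rightarrow> nat list list \<Rightarrow> nat list list" where
  "rps_rins a [] = [[a]]"
| "rps_rins a (c # cs) = (if a \<le> hd c then (a # c) # cs else c # rps_rins a cs)"

definition rps_tab :: "nat list \<Rightarrow> nat list list" where
  "rps_tab w = foldl (\<lambda>B a. rps_rins a B) [] w"

definition alph :: "nat \<Rightarrow> nat set" where
  "alph n = {1..n}"

definition rps_equiv :: "nat list \<Rightarrow> nat list \<Rightarrow> bool" where
  "rps_equiv u v \<longleftrightarrow> rps_tab u = rps_tab v"

inductive cong_gen :: "('b list \<times> 'b list) set \<Rightarrow> 'b list \<Rightarrow> 'b list \<Rightarrow> bool"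
  for R where
  refl: "cong_gen R u u"
| step: "(l, r) \<in> R \<Longrightarrow> cong_gen R (u @ l @ v) (u @ r @ v)"
| sym: "cong_gen R u v \<Longrightarrow> cong_gen R v u"
| trans: "cong_gen R u v \<Longrightarrow> cong_gen R v w \<Longrightarrow> cong_gen R u w"

definition word_hom :: "('b \<Rightarrow> 'a list) \<Rightarrow> 'b list \<Rightarrow> 'a list" where
  "word_hom f u = concat (map f u)"

(* The monoid M = A-star / eq (eq a congruence on A-star) is finitely presented:
   there exist a finite alphabet X, a finite set of relations R over X, and a monoid
   isomorphism  <X | R>  ->  M.  A homomorphism from <X | R> to M is determined by
   the images of the generators (represented by words f x over A); it is well defined
   and injective iff (u ~_R v <-> f(u) eq f(v)) for all u, v in X-star, and surjective iff
   every element of M is the image of some word over X. *)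
definition finitely_presented_quot ::
  "'a set \<Rightarrow> ('a list \<Rightarrow> 'a list \<Rightarrow> bool) \<Rightarrow> bool" where
  "finitely_presented_quot A eq \<longleftrightarrow>
     (\<exists>(X :: nat set) R f.
        finite X \<and> finite R \<and> R \<subseteq> lists X \<times> lists X \<and>
        (\<forall>x\<in>X. f x \<in> lists A) \<and>
        (\<forall>u\<in>lists X. \<forall>v\<in>lists X. cong_gen R u v \<longleftrightarrow> eq (word_hom f u) (word_hom f v)) \<and>
        (\<forall>w\<in>lists A. \<exists>u\<in>lists X. eq (word_hom f u) w))"

end

theory Submission
  imports Defs "HOL-Library.Multiset"
begin

text \<open>
  Fix a finite presentation and let \<open>b\<close> bound the lengths of the images of all its relators.
  If every factor of length at most \<open>b\<close> of some word \<open>w\<close> is alone in its congruence class,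
  then no relation can be applied to (a preimage of) \<open>w\<close> without leaving it unchanged, so the
  class of \<open>w\<close> in the presented monoid is a singleton. In \<open>rps\<^sub>n\<close> the word \<open>1 2\<^sup>k 1\<close> has
  this property for \<open>b \<le> k\<close>, because a short factor contains at most one letter \<open>1\<close> and the
  words \<open>2\<^sup>i 1 2\<^sup>j\<close> are determined by their tableaux; yet \<open>1 2\<^sup>k 1\<close> and \<open>1 1 2\<^sup>k\<close> have the same
  tableau.
\<close>

definition locally_rigid :: "('a list \<Rightarrow> 'a list \<Rightarrow> bool) \<Rightarrow> nat \<Rightarrow> 'a list \<Rightarrow> bool" where
  "locally_rigid eq b w \<longleftrightarrow> (\<forall>p s q t. p @ s @ q = w \<longrightarrow> length s \<le> b \<longrightarrow> eq s t \<longrightarrow> t = s)"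

lemma locally_rigidD: "locally_rigid eq b (p @ s @ q) \<Longrightarrow> length s \<le> b \<Longrightarrow> eq s t \<Longrightarrow> t = s"
  unfolding locally_rigid_def by blast

lemma word_hom_append [simp]: "word_hom f (u @ v) = word_hom f u @ word_hom f v"
  by (simp add: word_hom_def)

lemma cong_gen_word_hom_locally_rigid:
  assumes "cong_gen R u v" and "symp eq" and rigid: "locally_rigid eq b w"
    and rel: "\<And>l r. (l, r) \<in> R \<Longrightarrow>
      eq (word_hom f l) (word_hom f r) \<and> length (word_hom f l) \<le> b \<and> length (word_hom f r) \<le> b"
  shows "word_hom f u = w \<longleftrightarrow> word_hom f v = w"
  using assms(1)
proof (induction rule: cong_gen.induct)
  case (step l r u v)
  have eq: "eq (word_hom f l) (word_hom f r)" "eq (word_hom f r) (word_hom f l)"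
    and len: "length (word_hom f l) \<le> b" "length (word_hom f r) \<le> b"
    using rel[OF step] sympD[OF \<open>symp eq\<close>] by auto
  have "word_hom f r = word_hom f l" if "word_hom f (u @ l @ v) = w"
    using locally_rigidD[of eq b "word_hom f u" "word_hom f l" "word_hom f v"] rigid that len eq by simp
  moreover have "word_hom f l = word_hom f r" if "word_hom f (u @ r @ v) = w"
    using locally_rigidD[of eq b "word_hom f u" "word_hom f r" "word_hom f v"] rigid that len eq by simp
  ultimately show ?case by auto
qed auto

lemma word_hom_surj_on_rigid_letters:
  assumes "\<And>x. x \<in> S \<Longrightarrow> \<exists>u\<in>lists X. word_hom f u = [x]" and "set v \<subseteq> S"
  shows "\<exists>u\<in>lists X. word_hom f u = v"
  using assms(2)
proof (induction v)
  case Nil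
  show ?case by (intro bexI[of _ "[]"]) (auto simp: word_hom_def)
next
  case (Cons x v)
  have "x \<in> S" using Cons.prems by simp
  then obtain u\<^sub>x where "u\<^sub>x \<in> lists X" "word_hom f u\<^sub>x = [x]"
    using assms(1) by blast
  moreover obtain u where "u \<in> lists X" "word_hom f u = v"
    using Cons by auto
  ultimately show ?case by (intro bexI[of _ "u\<^sub>x @ u"]) auto
qed

lemma word_hom_surj_on_locally_rigid:
  assumes "symp eq" and surj: "\<forall>w\<in>lists A. \<exists>u\<in>lists X. eq (word_hom f u) w"
    and rigid: "locally_rigid eq (Suc b) w" and "set w \<subseteq> A" and "set v \<subseteq> set w"
  shows "\<exists>u\<in>lists X. word_hom f u = v"
proof (rule word_hom_surj_on_rigid_letters[OF _ \<open>set v \<subseteq> set w\<close>])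
  fix x
  assume "x \<in> set w"
  then obtain p q where w_split: "w = p @ [x] @ q"
    by (auto dest: split_list)
  have "[x] \<in> lists A"
    using \<open>set w \<subseteq> A\<close> \<open>x \<in> set w\<close> by auto
  then obtain u where "u \<in> lists X" "eq (word_hom f u) [x]"
    using surj by blast
  moreover have "eq [x] (word_hom f u)"
    using \<open>symp eq\<close> calculation(2) by (rule sympD)
  then have "word_hom f u = [x]"
    using locally_rigidD[of eq "Suc b" p "[x]" q] rigid unfolding w_split by simp
  ultimately show "\<exists>u\<in>lists X. word_hom f u = [x]" by blast
qed

lemma not_finitely_presented_quot_if_locally_rigid:
  assumes "symp eq"
    and witness: "\<And>b. \<exists>w w'. set w \<subseteq> A \<and> set w' \<subseteq> set w \<and> eq w w' \<and> w' \<noteq> w \<and> locally_rigid eq b w"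
  shows "\<not> finitely_presented_quot A eq"
proof
  assume "finitely_presented_quot A eq"
  then obtain X :: "nat set" and R f where
    "finite R" and RX: "R \<subseteq> lists X \<times> lists X" and
    inj: "\<forall>u\<in>lists X. \<forall>v\<in>lists X. cong_gen R u v \<longleftrightarrow> eq (word_hom f u) (word_hom f v)" and
    surj: "\<forall>w\<in>lists A. \<exists>u\<in>lists X. eq (word_hom f u) w"
    unfolding finitely_presented_quot_def by (elim exE conjE)
  let ?len = "\<lambda>(l, r). length (word_hom f l) + length (word_hom f r)"
  have "finite (?len ` R)"
    using \<open>finite R\<close> by simp
  then obtain b where b: "\<forall>m\<in>?len ` R. m \<le> b"
    unfolding finite_nat_set_iff_bounded_le by blast
  obtain w w' where w: "set w \<subseteq> A" "set w' \<subseteq> set w" "eq w w'" "w' \<noteq> w"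
    and rigid: "locally_rigid eq (Suc b) w"
    using witness by blast
  note image = word_hom_surj_on_locally_rigid[OF \<open>symp eq\<close> surj rigid w(1)]
  obtain U where U: "U \<in> lists X" "word_hom f U = w"
    using image[of w] by blast
  obtain V where V: "V \<in> lists X" "word_hom f V = w'"
    using image[OF w(2)] by blast
  have "cong_gen R U V"
    using inj[rule_format, OF U(1) V(1)] U(2) V(2) w(3) by simp
  moreover have "eq (word_hom f l) (word_hom f r) \<and>
      length (word_hom f l) \<le> Suc b \<and> length (word_hom f r) \<le> Suc b" if "(l, r) \<in> R" for l r
  proof -
    have "cong_gen R ([] @ l @ []) ([] @ r @ [])"
      using cong_gen.step that .
    moreover have "l \<in> lists X" "r \<in> lists X"
      using RX that by auto
    ultimately have "eq (word_hom f l) (word_hom f r)"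
      using inj by auto
    moreover have "?len (l, r) \<le> b"
      using b that by blast
    ultimately show ?thesis by simp
  qed
  ultimately have "word_hom f V = w"
    using cong_gen_word_hom_locally_rigid[OF _ \<open>symp eq\<close> rigid] U(2) by blast
  with V(2) w(4) show False by simp
qed

abbreviation rps_ins :: "nat list list \<Rightarrow> nat \<Rightarrow> nat list list" where
  "rps_ins B a \<equiv> rps_rins a B"

lemma mset_concat_rps_rins: "mset (concat (rps_rins a B)) = add_mset a (mset (concat B))"
  by (induction B) auto

lemma mset_concat_rps_tab: "mset (concat (rps_tab w)) = mset w"
proof -
  have "mset (concat (foldl rps_ins B w)) = mset (concat B) + mset w" for B
    by (induction w arbitrary: B) (auto simp: mset_concat_rps_rins)
  then show ?thesis by (simp add: rps_tab_def)
qed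

lemma rps_tab_append: "rps_tab (u @ v) = foldl rps_ins (rps_tab u) v"
  by (simp add: rps_tab_def)

lemma rps_tab_replicate: "rps_tab (replicate k a) = (if k = 0 then [] else [replicate k a])"
proof (induction k)
  case (Suc k)
  then show ?case
    using rps_tab_append[of "replicate k a" "[a]"] by (cases k) (auto simp: replicate_append_same)
qed (simp add: rps_tab_def)

lemma foldl_rps_ins_skip_column:
  "\<forall>a\<in>set v. hd c < a \<Longrightarrow> foldl rps_ins (c # B) v = c # foldl rps_ins B v"
  by (induction v arbitrary: B) auto

lemma rps_tab_replicate_letter_replicate:
  assumes "x < y"
  shows "rps_tab (replicate i y @ x # replicate k y) = (x # replicate i y) # rps_tab (replicate k y)"
proof -
  have "rps_tab (replicate i y @ [x]) = [x # replicate i y]"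
    using assms by (simp add: rps_tab_append rps_tab_replicate)
  then show ?thesis
    using assms rps_tab_append[of "replicate i y @ [x]" "replicate k y"]
    by (simp add: foldl_rps_ins_skip_column) (simp add: rps_tab_def)
qed

lemma replicate_if_not_in_set:
  "set s \<subseteq> {x, y} \<Longrightarrow> x \<notin> set s \<Longrightarrow> s = replicate (length s) y"
  by (induction s) auto

lemma replicate_letter_replicate_if_count_list_1:
  assumes "set s \<subseteq> {x, y}" "count_list s x = 1"
  obtains i k where "s = replicate i y @ x # replicate k y"
proof -
  have "x \<in> set s" using assms(2) by (metis count_list_0_iff zero_neq_one)
  then obtain p q where s: "s = p @ x # q" "x \<notin> set p" by (metis split_list_first)
  then have "x \<notin> set q" using assms(2) by (simp add: count_list_0_iff)
  then show ?thesis
    using that[of "length p" "length q"] replicate_if_not_in_set[of p x y]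
      replicate_if_not_in_set[of q x y] s assms(1) by auto
qed

lemma rps_equiv_imp_eq_if_count_list_le_1:
  assumes "x < y" "set s \<subseteq> {x, y}" "count_list s x \<le> 1" "rps_equiv s t"
  shows "t = s"
proof -
  have mset: "mset t = mset s"
    using assms(4) mset_concat_rps_tab[of s] mset_concat_rps_tab[of t] by (simp add: rps_equiv_def)
  have set: "set t \<subseteq> {x, y}"
    using assms(2) arg_cong[OF mset, of set_mset] by simp
  have count: "count_list t x = count_list s x"
    using arg_cong[OF mset, of "\<lambda>M. count M x"] by (simp add: count_mset)
  have length: "length t = length s"
    using arg_cong[OF mset, of size] by simp
  consider "count_list s x = 0" | "count_list s x = 1" using assms(3) by linarith
  then show ?thesis
  proof cases
    case 1
    then have "x \<notin> set s" "x \<notin> set t"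
      using count by (simp_all add: count_list_0_iff[symmetric])
    then show ?thesis
      using replicate_if_not_in_set[OF assms(2)] replicate_if_not_in_set[OF set] length by metis
  next
    case 2
    obtain i k where s: "s = replicate i y @ x # replicate k y"
      by (rule replicate_letter_replicate_if_count_list_1[OF assms(2) 2])
    from 2 count have "count_list t x = 1" by simp
    then obtain i' k' where t: "t = replicate i' y @ x # replicate k' y"
      by (rule replicate_letter_replicate_if_count_list_1[OF set])
    have "i' = i"
      using assms(4) unfolding s t rps_equiv_def rps_tab_replicate_letter_replicate[OF assms(1)] by simp
    with length show ?thesis unfolding s t by simp
  qed
qed

lemma count_list_short_factor_le_1:
  assumes "x \<noteq> y" "p @ s @ q = x # replicate k y @ [x]" "length s \<le> k"
  shows "count_list s x \<le> 1"
proof (rule ccontr)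
  assume "\<not> count_list s x \<le> 1"
  moreover have "count_list p x + count_list s x + count_list q x \<le> 2"
    using arg_cong[OF assms(2), of "\<lambda>w. count_list w x"] assms(1) by simp
  ultimately have "count_list p x = 0" "count_list q x = 0" by linarith+
  then have "x \<notin> set p" "x \<notin> set q" by (simp_all add: count_list_0_iff)
  moreover have "p \<noteq> [] \<Longrightarrow> hd p = x" "q \<noteq> [] \<Longrightarrow> last q = x"
    using arg_cong[OF assms(2), of hd] arg_cong[OF assms(2), of last] by auto
  ultimately have "p = []" "q = []"
    by (metis hd_in_set, metis last_in_set)
  then show False
    using assms by simp
qed

lemma locally_rigid_rps_equiv:
  assumes "x < y" "b \<le> k"
  shows "locally_rigid rps_equiv b (x # replicate k y @ [x])"
  unfolding locally_rigid_def
proof (intro allI impI)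
  fix p s q t
  assume factor: "p @ s @ q = x # replicate k y @ [x]" and "length s \<le> b" "rps_equiv s t"
  have "set s \<subseteq> {x, y}"
    using arg_cong[OF factor, of set] by auto
  then show "t = s"
    using rps_equiv_imp_eq_if_count_list_le_1 count_list_short_factor_le_1[OF _ factor] assms
      \<open>length s \<le> b\<close> \<open>rps_equiv s t\<close> by simp
qed

lemma rps_equiv_move_letter:
  assumes "x < y"
  shows "rps_equiv (x # replicate k y @ [x]) (x # x # replicate k y)"
proof -
  have "rps_tab (x # x # replicate k y) = [x, x] # rps_tab (replicate k y)"
    using assms by (simp add: rps_tab_def foldl_rps_ins_skip_column)
  moreover have "rps_tab (x # replicate k y @ [x]) = [x, x] # rps_tab (replicate k y)"
    using rps_tab_replicate_letter_replicate[OF assms, of 0 k]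
      rps_tab_append[of "x # replicate k y" "[x]"] assms
    by (simp add: rps_tab_replicate)
  ultimately show ?thesis by (simp add: rps_equiv_def)
qed

theorem proposition3p25:
  fixes n :: nat
  assumes "n \<ge> 2"
  shows "\<not> finitely_presented_quot (alph n) rps_equiv"
proof (rule not_finitely_presented_quot_if_locally_rigid)
  show "symp rps_equiv" by (simp add: symp_def rps_equiv_def)
  fix b
  let ?w = "1 # replicate (Suc b) 2 @ [1::nat]" and ?w' = "1 # 1 # replicate (Suc b) (2::nat)"
  have "set ?w \<subseteq> alph n" using assms by (auto simp: alph_def)
  moreover have "locally_rigid rps_equiv b ?w"
    by (rule locally_rigid_rps_equiv) simp_all
  moreover have "rps_equiv ?w ?w'"
    by (rule rps_equiv_move_letter) simp
  ultimately show "\<exists>w w'. set w \<subseteq> alph n \<and> set w' \<subseteq> set w \<and> rps_equiv w w' \<and> w' \<noteq> w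
      \<and> locally_rigid rps_equiv b w"
    by (intro exI[of _ ?w] exI[of _ ?w']) auto
qed

end
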